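(* For every integer $n\ge 2$ there is a planar interval colourable graph $G$ on $n$ vertices with $t(G)=\lfloor 3n/2\rfloor-2$. In particular the bound of $\frac32 n-2$ on $t(G)$ for planar interval colourable $n$-vertex graphs is attained for every even $n\ge 2$.
   Context: An interval colouring of a graph $G$ is a proper edge-colouring $c\colon E(G)\to\mathbb{N}$ such that for every vertex $v$, the set of colours on edges incident to $v$ is a set of consecutive integers. For an interval colourable graph $G$, $t(G)$ denotes the greatest number of distinct colours used in an interval colouring of $G$. *)

theory Defs
  imports "HOL-Analysis.Analysis"
begin

definition simple_graph :: "'a set \<Rightarrow> 'a set set \<Rightarrow> bool" where
  "simple_graph V E \<longleftrightarrow> finite V \<and>
     (\<forall>e\<in>E. \<exists>u v. u \<in> V \<and> v \<in> V \<and> u \<noteq> v \<and> e = {u, v})"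

definition planar_embedding ::
  "'a set \<Rightarrow> 'a set set \<Rightarrow> ('a \<Rightarrow> complex) \<Rightarrow> ('a set \<Rightarrow> real \<Rightarrow> complex) \<Rightarrow> bool" where
  "planar_embedding V E p \<gamma> \<longleftrightarrow> inj_on p V \<and>
     (\<forall>e\<in>E. arc (\<gamma> e) \<and> {pathstart (\<gamma> e), pathfinish (\<gamma> e)} = p ` e) \<and>
     (\<forall>e\<in>E. \<forall>v\<in>V. v \<notin> e \<longrightarrow> p v \<notin> path_image (\<gamma> e)) \<and>
     (\<forall>e\<in>E. \<forall>e'\<in>E. e \<noteq> e' \<longrightarrow> path_image (\<gamma> e) \<inter> path_image (\<gamma> e') \<subseteq> p ` (e \<inter> e'))"

definition planar :: "'a set \<Rightarrow> 'a set set \<Rightarrow> bool" where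
  "planar V E \<longleftrightarrow> (\<exists>p \<gamma>. planar_embedding V E p \<gamma>)"

definition interval_colouring :: "'a set \<Rightarrow> 'a set set \<Rightarrow> ('a set \<Rightarrow> nat) \<Rightarrow> bool" where
  "interval_colouring V E c \<longleftrightarrow>
     (\<forall>e\<in>E. \<forall>e'\<in>E. e \<noteq> e' \<and> e \<inter> e' \<noteq> {} \<longrightarrow> c e \<noteq> c e') \<and>
     (\<forall>v\<in>V. \<exists>a b. c ` {e\<in>E. v \<in> e} = {a..b})"

definition interval_colourable :: "'a set \<Rightarrow> 'a set set \<Rightarrow> bool" where
  "interval_colourable V E \<longleftrightarrow> (\<exists>c. interval_colouring V E c)"

definition t_max :: "'a set \<Rightarrow> 'a set set \<Rightarrow> nat" where
  "t_max V E = Max {card (c ` E) | c. interval_colouring V E c}"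

end

theory Submission
  imports Defs
begin

(*
  The extremal graph for n = 2k + r (r \<le> 1) is a ladder of k rungs {2j, 2j+1} in which
  consecutive rungs are joined completely (a K_{2,2} between levels j and j+1), plus, for odd n,
  a pendant edge from vertex 0 to an extra vertex 2k. Colouring rung j with 3j+1, the two
  "parallel" cross edges above it with 3j+2 and the two "crossing" ones with 3j+3 (and the pendant
  edge with 0) is an interval colouring with 3k-2+r colours.

  Conversely, in an interval colouring two edges at a vertex of degree d differ in colour by less
  than d. Walking up the ladder from any edge, the interior vertices have degree 5, but as two
  distinct cross edges leave each of them, one of them is at most 3 (not 4) above the edge we
  arrive on. Summing along the ladder bounds the difference of any two colours by 3k-3+r.

  The drawing is straight except for one cross edge per level, which is routed around everything
  drawn below it.
*)

section \<open>Interval colourings\<close>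

lemma interval_colouring_proper:
  assumes "interval_colouring V E c" "e \<in> E" "e' \<in> E" "e \<noteq> e'" "v \<in> e" "v \<in> e'"
  shows "c e \<noteq> c e'"
proof -
  have "\<forall>e\<in>E. \<forall>e'\<in>E. e \<noteq> e' \<and> e \<inter> e' \<noteq> {} \<longrightarrow> c e \<noteq> c e'"
    using assms(1) unfolding interval_colouring_def by (rule conjunct1)
  moreover have "e \<inter> e' \<noteq> {}"
    using assms(5,6) by blast
  ultimately show ?thesis
    using assms(2-4) by blast
qed

lemma interval_colouring_gap:
  assumes c: "interval_colouring V E c" and v: "v \<in> V"
    and e: "e \<in> E" "v \<in> e" and e': "e' \<in> E" "v \<in> e'"
  shows "c e < c e' + card {e \<in> E. v \<in> e}"
proof -
  let ?I = "{e \<in> E. v \<in> e}"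
  have "\<forall>v\<in>V. \<exists>x y. c ` {e \<in> E. v \<in> e} = {x..y}"
    using c unfolding interval_colouring_def by (rule conjunct2)
  with v obtain x y where xy: "c ` ?I = {x..y}"
    by blast
  have "inj_on c ?I"
  proof (rule inj_onI)
    fix f g assume f: "f \<in> ?I" and g: "g \<in> ?I" and fg: "c f = c g"
    show "f = g"
    proof (rule ccontr)
      assume "f \<noteq> g"
      with f g have "c f \<noteq> c g"
        by (intro interval_colouring_proper[OF c]) auto
      with fg show False by contradiction
    qed
  qed
  then have "card ?I = Suc y - x"
    using card_image[of c ?I] xy by simp
  moreover have "c e \<le> y" "x \<le> c e'"
    using e e' xy by (auto dest: equalityD1)
  ultimately show ?thesis by linarith
qed

lemma card_le_if_gaps_less:
  fixes A :: "nat set"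
  assumes gap: "\<And>x y. x \<in> A \<Longrightarrow> y \<in> A \<Longrightarrow> x < y + d"
  shows "card A \<le> d"
proof (cases "A = {}")
  case False
  then obtain y where "y \<in> A" by blast
  then have "A \<subseteq> {..<y + d}"
    using gap by blast
  then have fin: "finite A"
    by (rule finite_subset) simp
  have m: "Min A \<in> A"
    using Min_in[OF fin False] .
  have "A \<subseteq> {Min A..<Min A + d}"
  proof
    fix x assume x: "x \<in> A"
    show "x \<in> {Min A..<Min A + d}"
      using gap[OF x m] Min_le[OF fin x] by simp
  qed
  then show ?thesis
    using card_mono[of "{Min A..<Min A + d}" A] by simp
qed simp

lemma t_max_eqI:
  assumes "interval_colouring V E c" "card (c ` E) = m"
    and le: "\<And>c'. interval_colouring V E c' \<Longrightarrow> card (c' ` E) \<le> m"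
  shows "t_max V E = m"
proof -
  let ?S = "{card (c ` E) |c. interval_colouring V E c}"
  have S: "y \<le> m" if "y \<in> ?S" for y
  proof -
    from that obtain c' where "y = card (c' ` E)" "interval_colouring V E c'"
      by blast
    then show ?thesis using le by simp
  qed
  have "finite ?S"
    by (rule finite_subset[of _ "{..m}"]) (use S in auto)
  moreover have "m \<in> ?S"
    using assms(1,2) by blast
  ultimately show ?thesis
    unfolding t_max_def using S by (intro Max_eqI)
qed

section \<open>The ladder graph\<close>

definition rung :: "nat \<Rightarrow> nat set" where
  "rung j = {2*j, 2*j+1}"

definition cross :: "nat \<Rightarrow> nat \<Rightarrow> nat \<Rightarrow> nat set" where
  "cross j a b = {2*j+a, 2*j+2+b}"

definition pendant :: "nat \<Rightarrow> nat set" where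
  "pendant k = {0, 2*k}"

definition ladder :: "nat \<Rightarrow> nat \<Rightarrow> nat set set" where
  "ladder k r = {rung j | j. j < k} \<union> {cross j a b | j a b. j+1 < k \<and> a < 2 \<and> b < 2}
     \<union> (if r = 1 then {pendant k} else {})"

lemma rung_in_ladder: "j < k \<Longrightarrow> rung j \<in> ladder k r"
  by (auto simp: ladder_def)

lemma cross_in_ladder: "j+1 < k \<Longrightarrow> a < 2 \<Longrightarrow> b < 2 \<Longrightarrow> cross j a b \<in> ladder k r"
  by (auto simp: ladder_def)

lemma pendant_in_ladder: "r = 1 \<Longrightarrow> pendant k \<in> ladder k r"
  by (auto simp: ladder_def)

lemmas ladder_edges_in = rung_in_ladder cross_in_ladder pendant_in_ladder

lemma ladder_edgeE:
  assumes "e \<in> ladder k r"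
  obtains (rung) j where "j < k" "e = rung j"
    | (cross) j a b where "j+1 < k" "a < 2" "b < 2" "e = cross j a b"
    | (pendant) "r = 1" "e = pendant k"
  using assms unfolding ladder_def by (auto split: if_splits)

lemma mem_rung: "v \<in> rung j \<longleftrightarrow> v = 2*j \<or> v = 2*j+1"
  by (auto simp: rung_def)

lemma mem_cross: "v \<in> cross j a b \<longleftrightarrow> v = 2*j+a \<or> v = 2*j+2+b"
  by (auto simp: cross_def)

lemma mem_pendant: "v \<in> pendant k \<longleftrightarrow> v = 0 \<or> v = 2*k"
  by (auto simp: pendant_def)

lemmas mem_ladder_edge = mem_rung mem_cross mem_pendant

lemma cross_eq_iff:
  "a < 2 \<Longrightarrow> b < 2 \<Longrightarrow> a' < 2 \<Longrightarrow> b' < 2 \<Longrightarrow>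
    cross j a b = cross j' a' b' \<longleftrightarrow> j = j' \<and> a = a' \<and> b = b'"
  unfolding cross_def by (auto simp: doubleton_eq_iff; presburger)

lemma cross_neq_rung: "a < 2 \<Longrightarrow> cross j a b \<noteq> rung j'"
  unfolding cross_def rung_def by (auto simp: doubleton_eq_iff; presburger)

lemma pendant_neq_rung: "0 < k \<Longrightarrow> pendant k \<noteq> rung j"
  unfolding pendant_def rung_def by (auto simp: doubleton_eq_iff; presburger)

lemma pendant_neq_cross: "j+1 < k \<Longrightarrow> a < 2 \<Longrightarrow> b < 2 \<Longrightarrow> pendant k \<noteq> cross j a b"
  unfolding pendant_def cross_def by (auto simp: doubleton_eq_iff; presburger)

lemma ladder_edge_subset: "e \<in> ladder k r \<Longrightarrow> e \<subseteq> {0..<2*k+r}"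
  by (elim ladder_edgeE) (auto simp: rung_def cross_def pendant_def)

lemma finite_ladder: "finite (ladder k r)"
  by (rule finite_subset[of _ "Pow {0..<2*k+r}"]) (auto dest: ladder_edge_subset)

lemma simple_graph_ladder:
  assumes "0 < k"
  shows "simple_graph {0..<2*k+r} (ladder k r)"
  unfolding simple_graph_def
proof (intro conjI ballI)
  fix e assume "e \<in> ladder k r"
  then show "\<exists>u v. u \<in> {0..<2*k+r} \<and> v \<in> {0..<2*k+r} \<and> u \<noteq> v \<and> e = {u, v}"
  proof (cases rule: ladder_edgeE)
    case (rung j) then show ?thesis
      by (intro exI[of _ "2*j"] exI[of _ "2*j+1"]) (auto simp: rung_def)
  next
    case (cross j a b) then show ?thesis
      by (intro exI[of _ "2*j+a"] exI[of _ "2*j+2+b"]) (auto simp: cross_def)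
  next
    case pendant then show ?thesis
      using assms by (intro exI[of _ 0] exI[of _ "2*k"]) (auto simp: pendant_def)
  qed
qed simp

definition ladder_degree :: "nat \<Rightarrow> nat \<Rightarrow> nat \<Rightarrow> nat \<Rightarrow> int" where
  "ladder_degree k r j a = 1 + (if 0 < j then 2 else 0) + (if j+1 < k then 2 else 0)
     + (if j = 0 \<and> a = 0 \<and> r = 1 then 1 else 0)"

definition ladder_star :: "nat \<Rightarrow> nat \<Rightarrow> nat \<Rightarrow> nat \<Rightarrow> nat set set" where
  "ladder_star k r j a = {rung j}
     \<union> (if 0 < j then {cross (j-1) 0 a, cross (j-1) 1 a} else {})
     \<union> (if j+1 < k then {cross j a 0, cross j a 1} else {})
     \<union> (if j = 0 \<and> a = 0 \<and> r = 1 then {pendant k} else {})"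

lemma ladder_edges_at:
  assumes "j < k" "a < 2"
  shows "{e \<in> ladder k r. 2*j+a \<in> e} = ladder_star k r j a"
proof (intro equalityI subsetI)
  fix e assume "e \<in> {e \<in> ladder k r. 2*j+a \<in> e}"
  then have e: "e \<in> ladder k r" "2*j+a \<in> e" by auto
  from e(1) show "e \<in> ladder_star k r j a"
  proof (cases rule: ladder_edgeE)
    case (rung i)
    have "2*j+a = 2*i \<or> 2*j+a = 2*i+1"
      using e(2) rung(2) by (simp add: mem_rung)
    then have "i = j"
      using assms(2) by presburger
    then show ?thesis using rung(2) by (simp add: ladder_star_def)
  next
    case (cross i a' b')
    have "2*j+a = 2*i+a' \<or> 2*j+a = 2*i+2+b'"
      using e(2) cross(4) by (simp add: mem_cross)
    then have "i = j \<and> a' = a \<or> j = i+1 \<and> b' = a"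
      using assms(2) cross(2,3) by presburger
    moreover have "a' = 0 \<or> a' = 1" "b' = 0 \<or> b' = 1"
      using cross(2,3) by linarith+
    ultimately show ?thesis
      using cross(1,4) by (auto simp: ladder_star_def)
  next
    case pendant
    have "2*j+a = 0 \<or> 2*j+a = 2*k"
      using e(2) pendant(2) by (simp add: mem_pendant)
    then have "j = 0" "a = 0"
      using assms by presburger+
    then show ?thesis using pendant by (simp add: ladder_star_def)
  qed
next
  fix e assume "e \<in> ladder_star k r j a"
  then consider "e = rung j" | "0 < j" "e = cross (j-1) 0 a" | "0 < j" "e = cross (j-1) 1 a"
    | "j+1 < k" "e = cross j a 0" | "j+1 < k" "e = cross j a 1" | "j = 0" "a = 0" "r = 1" "e = pendant k"
    unfolding ladder_star_def by (simp split: if_splits; blast)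
  then show "e \<in> {e \<in> ladder k r. 2*j+a \<in> e}"
    using assms by cases (simp_all add: ladder_edges_in mem_ladder_edge; presburger)+
qed

lemma card_ladder_star: "int (card (ladder_star k r j a)) \<le> ladder_degree k r j a"
proof -
  define L where "L = (if 0 < j then {cross (j-1) 0 a, cross (j-1) 1 a} else {})"
  define R where "R = (if j+1 < k then {cross j a 0, cross j a 1} else {})"
  define P where "P = (if j = 0 \<and> a = 0 \<and> r = 1 then {pendant k} else {})"
  have "ladder_star k r j a = {rung j} \<union> L \<union> R \<union> P"
    unfolding ladder_star_def L_def R_def P_def ..
  then have "card (ladder_star k r j a) \<le> card ({rung j} \<union> L \<union> R) + card P"
    by (simp only: card_Un_le)
  moreover have "card ({rung j} \<union> L \<union> R) \<le> 1 + card L + card R"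
    using card_Un_le[of "{rung j}" L] card_Un_le[of "{rung j} \<union> L" R] by simp
  ultimately have star: "int (card (ladder_star k r j a)) \<le> 1 + int (card L) + int (card R) + int (card P)"
    by linarith
  have "int (card L) \<le> (if 0 < j then 2 else 0)"
    unfolding L_def by (simp add: card_insert_if)
  moreover have "int (card R) \<le> (if j+1 < k then 2 else 0)"
    unfolding R_def by (simp add: card_insert_if)
  moreover have "int (card P) \<le> (if j = 0 \<and> a = 0 \<and> r = 1 then 1 else 0)"
    unfolding P_def by simp
  ultimately have "1 + int (card L) + int (card R) + int (card P) \<le> ladder_degree k r j a"
    unfolding ladder_degree_def by (intro add_mono order_refl)
  with star show ?thesis
    by (rule order_trans)
qed

section \<open>At most \<open>3k - 2 + r\<close> colours\<close>

locale ladder_colour_gaps =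
  fixes k r :: nat and C :: "nat set \<Rightarrow> int"
  assumes two_le_k: "2 \<le> k" and r_le_1: "r \<le> 1"
    and gap: "\<And>j a e e'. j < k \<Longrightarrow> a < 2 \<Longrightarrow> e \<in> ladder k r \<Longrightarrow> e' \<in> ladder k r \<Longrightarrow>
      2*j+a \<in> e \<Longrightarrow> 2*j+a \<in> e' \<Longrightarrow> C e \<le> C e' + ladder_degree k r j a - 1"
    and proper: "\<And>v e e'. e \<in> ladder k r \<Longrightarrow> e' \<in> ladder k r \<Longrightarrow> e \<noteq> e' \<Longrightarrow>
      v \<in> e \<Longrightarrow> v \<in> e' \<Longrightarrow> C e \<noteq> C e'"
begin

lemma uminus: "ladder_colour_gaps k r (\<lambda>e. - C e)"
proof
  show "- C e \<le> - C e' + ladder_degree k r j a - 1"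
    if "j < k" "a < 2" "e \<in> ladder k r" "e' \<in> ladder k r" "2*j+a \<in> e" "2*j+a \<in> e'" for j a e e'
    using gap[OF that(1,2,4,3,6,5)] by simp
  show "- C e \<noteq> - C e'"
    if "e \<in> ladder k r" "e' \<in> ladder k r" "e \<noteq> e'" "v \<in> e" "v \<in> e'" for v e e'
    using proper[OF that] by simp
qed (use two_le_k r_le_1 in auto)

lemma gap_of_two:
  assumes "j < k" "a < 2" "g \<in> ladder k r" "h \<in> ladder k r" "h' \<in> ladder k r"
    and "2*j+a \<in> g" "2*j+a \<in> h" "2*j+a \<in> h'" "h \<noteq> h'"
  shows "C h \<le> C g + ladder_degree k r j a - 2 \<or> C h' \<le> C g + ladder_degree k r j a - 2"
  using gap[OF assms(1,2,4,3,7,6)] gap[OF assms(1,2,5,3,8,6)] proper[OF assms(4,5,9,7,8)]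
  by linarith

text \<open>Colour bounds are carried up the ladder level by level through the cross edges
  between levels \<open>i\<close> and \<open>i+1\<close>.\<close>

definition low_cross :: "nat \<Rightarrow> int \<Rightarrow> bool" where
  "low_cross i \<beta> \<longleftrightarrow> (\<exists>a b. a < 2 \<and> b < 2 \<and> C (cross i a b) \<le> \<beta>)"

definition low_cross_to_each :: "nat \<Rightarrow> int \<Rightarrow> bool" where
  "low_cross_to_each i \<beta> \<longleftrightarrow> (\<forall>b<2. \<exists>a<2. C (cross i a b) \<le> \<beta>)"

lemma low_cross_mono: "low_cross i \<beta> \<Longrightarrow> \<beta> \<le> \<beta>' \<Longrightarrow> low_cross i \<beta>'"
  unfolding low_cross_def by force

lemma low_cross_to_each_mono: "low_cross_to_each i \<beta> \<Longrightarrow> \<beta> \<le> \<beta>' \<Longrightarrow> low_cross_to_each i \<beta>'"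
  unfolding low_cross_to_each_def by force

lemma low_cross_cross: "a < 2 \<Longrightarrow> b < 2 \<Longrightarrow> low_cross i (C (cross i a b))"
  unfolding low_cross_def by blast

lemma low_cross_from_edge:
  assumes i: "i+1 < k" and a: "a < 2" and g: "g \<in> ladder k r" "2*i+a \<in> g"
  shows "low_cross i (C g + ladder_degree k r i a - 2)"
    and "low_cross_to_each i (C g + ladder_degree k r i a - 1)"
proof -
  have "cross i a 0 \<noteq> cross i a 1"
    using a by (simp add: cross_eq_iff)
  then have "C (cross i a 0) \<le> C g + ladder_degree k r i a - 2 \<or>
      C (cross i a 1) \<le> C g + ladder_degree k r i a - 2"
    using i a g by (intro gap_of_two) (simp_all add: cross_in_ladder mem_cross)
  moreover have "(0::nat) < 2" "(1::nat) < 2"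
    by simp_all
  ultimately show "low_cross i (C g + ladder_degree k r i a - 2)"
    unfolding low_cross_def using a by blast
  have "C (cross i a b) \<le> C g + ladder_degree k r i a - 1" if "b < 2" for b
    using i a g that by (intro gap) (simp_all add: cross_in_ladder mem_cross)
  then show "low_cross_to_each i (C g + ladder_degree k r i a - 1)"
    unfolding low_cross_to_each_def using a by auto
qed

lemma low_cross_from_rung:
  assumes "i+1 < k"
  shows "low_cross i (C (rung i) + (if i = 0 then 1 else 3))"
    and "low_cross_to_each i (C (rung i) + (if i = 0 then 2 else 4))"
proof -
  define a :: nat where "a = (if i = 0 then 1 else 0)"
  have deg: "ladder_degree k r i a = (if i = 0 then 3 else 5)"
    using assms unfolding a_def ladder_degree_def by simp
  have a: "a < 2" "2*i+a \<in> rung i"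
    unfolding a_def by (simp_all add: mem_rung)
  have rung: "rung i \<in> ladder k r"
    using assms by (simp add: rung_in_ladder)
  show "low_cross i (C (rung i) + (if i = 0 then 1 else 3))"
    by (rule low_cross_mono[OF low_cross_from_edge(1)[OF assms a(1) rung a(2)]]) (simp add: deg)
  show "low_cross_to_each i (C (rung i) + (if i = 0 then 2 else 4))"
    by (rule low_cross_to_each_mono[OF low_cross_from_edge(2)[OF assms a(1) rung a(2)]]) (simp add: deg)
qed

lemma low_cross_from_pendant:
  assumes "r = 1"
  shows "low_cross 0 (C (pendant k) + 2)" and "low_cross_to_each 0 (C (pendant k) + 3)"
proof -
  have deg: "ladder_degree k r 0 0 = 4"
    using assms two_le_k by (simp add: ladder_degree_def)
  have "0+1 < k" "(0::nat) < 2" "pendant k \<in> ladder k r" "2*0+0 \<in> pendant k"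
    using assms two_le_k by (simp_all add: pendant_in_ladder mem_pendant)
  note from_edge = low_cross_from_edge[OF this]
  show "low_cross 0 (C (pendant k) + 2)"
    by (rule low_cross_mono[OF from_edge(1)]) (simp add: deg)
  show "low_cross_to_each 0 (C (pendant k) + 3)"
    by (rule low_cross_to_each_mono[OF from_edge(2)]) (simp add: deg)
qed

lemma low_cross_step:
  assumes "low_cross i \<beta>" "i+2 < k"
  shows "low_cross (i+1) (\<beta>+3)" and "low_cross_to_each (i+1) (\<beta>+4)"
proof -
  obtain a b where ab: "a < 2" "b < 2" "C (cross i a b) \<le> \<beta>"
    using assms(1) unfolding low_cross_def by blast
  have deg: "ladder_degree k r (i+1) b = 5"
    using assms(2) by (simp add: ladder_degree_def)
  have e: "i+1+1 < k" "cross i a b \<in> ladder k r" "2*(i+1)+b \<in> cross i a b"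
    using assms(2) ab by (simp_all add: cross_in_ladder mem_cross)
  note from_edge = low_cross_from_edge[OF e(1) ab(2) e(2,3)]
  show "low_cross (i+1) (\<beta>+3)"
    by (rule low_cross_mono[OF from_edge(1)]) (use ab deg in simp)
  show "low_cross_to_each (i+1) (\<beta>+4)"
    by (rule low_cross_to_each_mono[OF from_edge(2)]) (use ab deg in simp)
qed

lemma low_cross_iterate:
  assumes "low_cross i \<beta>" "i \<le> l" "l+1 < k"
  shows "low_cross l (\<beta> + 3 * int (l - i))"
  using assms(2,3)
proof (induction l rule: dec_induct)
  case base
  then show ?case using assms(1) by simp
next
  case (step m)
  then have "low_cross (Suc m) (\<beta> + 3 * int (m - i) + 3)"
    using low_cross_step(1)[of m] by simp
  then show ?case
    by (rule low_cross_mono) (use step.hyps(1) in \<open>simp add: of_nat_diff\<close>)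
qed

lemma rung_le_of_low_cross:
  assumes "low_cross i \<beta>" "i+1 < k"
  shows "C (rung (i+1)) \<le> \<beta> + (if i+2 < k then 4 else 2)"
proof -
  obtain a b where ab: "a < 2" "b < 2" "C (cross i a b) \<le> \<beta>"
    using assms(1) unfolding low_cross_def by blast
  have "C (rung (i+1)) \<le> C (cross i a b) + ladder_degree k r (i+1) b - 1"
    using assms(2) ab by (intro gap) (simp_all add: rung_in_ladder cross_in_ladder mem_rung mem_cross less_2_cases_iff)
  then show ?thesis
    using ab by (simp add: ladder_degree_def split: if_split_asm)
qed

lemma cross_le_of_low_cross_to_each:
  assumes "low_cross_to_each i \<beta>" "i+2 < k" "a < 2" "b < 2"
  shows "C (cross (i+1) a b) \<le> \<beta> + 4"
proof -
  obtain a' where a': "a' < 2" "C (cross i a' a) \<le> \<beta>"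
    using assms(1,3) unfolding low_cross_to_each_def by blast
  have "C (cross (i+1) a b) \<le> C (cross i a' a) + ladder_degree k r (i+1) a - 1"
    using assms a' by (intro gap) (simp_all add: cross_in_ladder mem_cross)
  then show ?thesis
    using a' assms(2) by (simp add: ladder_degree_def)
qed

lemma rung_le_far:
  assumes "low_cross i \<beta>" "i < l" "l < k"
  shows "C (rung l) \<le> \<beta> + 3 * int (l-1-i) + (if l+1 < k then 4 else 2)"
proof -
  have "low_cross (l-1) (\<beta> + 3 * int (l-1-i))"
    by (rule low_cross_iterate[OF assms(1)]) (use assms in auto)
  from rung_le_of_low_cross[OF this] show ?thesis
    using assms by simp
qed

lemma cross_le_far:
  assumes "low_cross i \<beta>" "i+1 < l" "l+1 < k" "a < 2" "b < 2"
  shows "C (cross l a b) \<le> \<beta> + 3 * int (l-2-i) + 8"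
proof -
  have l: "l-2+1 = l-1" "l-1+1 = l"
    using assms(2) by simp_all
  have "low_cross (l-2) (\<beta> + 3 * int (l-2-i))"
    by (rule low_cross_iterate[OF assms(1)]) (use assms in auto)
  then have "low_cross_to_each (l-1) (\<beta> + 3 * int (l-2-i) + 4)"
    using low_cross_step(2)[of "l-2"] assms(3) l(1) by simp
  then have "C (cross (l-1+1) a b) \<le> \<beta> + 3 * int (l-2-i) + 4 + 4"
    by (rule cross_le_of_low_cross_to_each) (use assms in simp_all)
  then show ?thesis
    using l(2) by simp
qed

abbreviation span :: int where
  "span \<equiv> 3 * int k - 3 + int r"

lemma ladder_degree_le_span: "j < k \<Longrightarrow> ladder_degree k r j a - 1 \<le> span"
  using two_le_k r_le_1 by (auto simp: ladder_degree_def)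

lemma span_rung_rung:
  assumes "i \<le> l" "l < k"
  shows "C (rung l) \<le> C (rung i) + span"
proof (cases "i = l")
  case True
  then show ?thesis using two_le_k by simp
next
  case False
  then have "i < l" using assms by simp
  then have "C (rung l) \<le> C (rung i) + (if i = 0 then 1 else 3) + 3 * int (l-1-i) + (if l+1 < k then 4 else 2)"
    using rung_le_far[OF low_cross_from_rung(1)] assms by simp
  then show ?thesis
    using \<open>i < l\<close> assms r_le_1 by (auto simp: of_nat_diff split: if_splits)
qed

lemma span_rung_cross:
  assumes "i \<le> l" "l+1 < k" "a < 2" "b < 2"
  shows "C (cross l a b) \<le> C (rung i) + span"
proof -
  consider "l = i" | "l = i+1" | "i+2 \<le> l"
    using assms by linarith
  then show ?thesis
  proof cases
    case 1
    have "C (cross l a b) \<le> C (rung i) + ladder_degree k r i a - 1"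
      using assms 1 by (intro gap) (simp_all add: rung_in_ladder cross_in_ladder mem_rung mem_cross less_2_cases_iff)
    then show ?thesis
      using ladder_degree_le_span[of i a] assms 1 by simp
  next
    case 2
    have "C (cross (i+1) a b) \<le> C (rung i) + (if i = 0 then 2 else 4) + 4"
      by (rule cross_le_of_low_cross_to_each[OF low_cross_from_rung(2)]) (use assms 2 in auto)
    then show ?thesis
      using 2 assms by (auto split: if_splits)
  next
    case 3
    have "C (cross l a b) \<le> C (rung i) + (if i = 0 then 1 else 3) + 3 * int (l-2-i) + 8"
      by (rule cross_le_far[OF low_cross_from_rung(1)]) (use assms 3 in auto)
    then show ?thesis
      using 3 assms by (auto simp: of_nat_diff split: if_splits)
  qed
qed

lemma span_cross_rung:
  assumes "i < l" "l < k" "a < 2" "b < 2"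
  shows "C (rung l) \<le> C (cross i a b) + span"
proof -
  have "C (rung l) \<le> C (cross i a b) + 3 * int (l-1-i) + (if l+1 < k then 4 else 2)"
    by (rule rung_le_far[OF low_cross_cross]) (use assms in auto)
  then show ?thesis
    using assms r_le_1 by (auto simp: of_nat_diff split: if_splits)
qed

lemma gap_cross:
  assumes "i+1 < k" "x < 2" "y < 2" "x' < 2" "y' < 2" "j < k" "c < 2"
    and "2*j+c \<in> cross i x y" "2*j+c \<in> cross i x' y'"
  shows "C (cross i x y) \<le> C (cross i x' y') + ladder_degree k r j c - 1"
  using assms by (intro gap) (simp_all add: cross_in_ladder)

lemma span_opposite_crosses_two_rungs:
  assumes "k = 2" "r = 0" "a < 2" "b < 2" "a' < 2" "b' < 2"
  shows "C (cross 0 a' b') \<le> C (cross 0 a b) + span"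
proof -
  text \<open>Here \<open>span = 3\<close> and every vertex has degree 3. Both routes of length two, through
    \<open>rung 1\<close> and through \<open>cross 0 a b'\<close>, could only reach \<open>+4\<close> if these two edges,
    which share the vertex \<open>2+b'\<close>, had the same colour.\<close>
  have deg: "\<And>j c. ladder_degree k r j c = 3"
    using assms(1,2) by (simp add: ladder_degree_def)
  have rung1: "rung 1 \<in> ladder k r"
    using assms(1) by (simp add: rung_in_ladder)
  have "C (rung 1) \<le> C (cross 0 a b) + ladder_degree k r 1 b - 1"
    using assms rung1 by (intro gap) (simp_all add: cross_in_ladder mem_rung mem_cross less_2_cases_iff)
  moreover have "C (cross 0 a' b') \<le> C (rung 1) + ladder_degree k r 1 b' - 1"
    using assms rung1 by (intro gap) (simp_all add: cross_in_ladder mem_rung mem_cross less_2_cases_iff)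
  moreover have "C (cross 0 a b') \<le> C (cross 0 a b) + ladder_degree k r 0 a - 1"
    using assms by (intro gap_cross) (simp_all add: mem_cross)
  moreover have "C (cross 0 a' b') \<le> C (cross 0 a b') + ladder_degree k r 1 b' - 1"
    using assms by (intro gap_cross) (simp_all add: mem_cross)
  moreover have "C (cross 0 a b') \<noteq> C (rung 1)"
    using assms rung1 by (intro proper[where v = "2+b'"])
      (simp_all add: cross_in_ladder cross_neq_rung mem_rung mem_cross less_2_cases_iff)
  ultimately show ?thesis
    using assms deg by simp
qed

lemma span_opposite_crosses:
  assumes "i+1 < k" "a < 2" "b < 2" "a' < 2" "b' < 2" "a' \<noteq> a" "b' \<noteq> b"
    and "k \<noteq> 2 \<or> r \<noteq> 0"
  shows "C (cross i a' b') \<le> C (cross i a b) + span"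
proof -
  text \<open>Pass through the cross edge at the odd bottom vertex \<open>2*i+1\<close>, which avoids
    the pendant edge.\<close>
  have deg: "ladder_degree k r i 1 + ladder_degree k r (i+1) c - 2 \<le> span" for c
    using two_le_k r_le_1 assms(1,8) by (auto simp: ladder_degree_def)
  show ?thesis
  proof (cases "a = 1")
    case True
    then have "a' = 0" using assms(4,6) by simp
    have "C (cross i a b') \<le> C (cross i a b) + ladder_degree k r i a - 1"
      using assms by (intro gap_cross) (simp_all add: mem_cross)
    moreover have "C (cross i a' b') \<le> C (cross i a b') + ladder_degree k r (i+1) b' - 1"
      using assms by (intro gap_cross) (simp_all add: mem_cross)
    ultimately show ?thesis
      using deg[of b'] True by simp
  next
    case False
    then have "a' = 1" using assms(2,4,6) by simp
    have "C (cross i a' b) \<le> C (cross i a b) + ladder_degree k r (i+1) b - 1"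
      using assms by (intro gap_cross) (simp_all add: mem_cross)
    moreover have "C (cross i a' b') \<le> C (cross i a' b) + ladder_degree k r i a' - 1"
      using assms by (intro gap_cross) (simp_all add: mem_cross)
    ultimately show ?thesis
      using deg[of b] \<open>a' = 1\<close> by simp
  qed
qed

lemma span_cross_cross_same_level:
  assumes "i+1 < k" "a < 2" "b < 2" "a' < 2" "b' < 2"
  shows "C (cross i a' b') \<le> C (cross i a b) + span"
proof -
  consider (same_bottom) "a' = a" | (same_top) "b' = b" | (opposite) "a' \<noteq> a" "b' \<noteq> b"
    by blast
  then show ?thesis
  proof cases
    case same_bottom
    then have "C (cross i a' b') \<le> C (cross i a b) + ladder_degree k r i a - 1"
      using assms by (intro gap_cross) (simp_all add: mem_cross)
    then show ?thesis
      using ladder_degree_le_span[of i a] assms(1) by simp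
  next
    case same_top
    then have "C (cross i a' b') \<le> C (cross i a b) + ladder_degree k r (i+1) b - 1"
      using assms by (intro gap_cross) (simp_all add: mem_cross)
    then show ?thesis
      using ladder_degree_le_span[of "i+1" b] assms(1) by simp
  next
    case opposite
    show ?thesis
    proof (cases "k = 2 \<and> r = 0")
      case True
      then have "i = 0" using assms(1) by simp
      then show ?thesis
        using span_opposite_crosses_two_rungs[of a b a' b'] True assms by simp
    next
      case False
      then show ?thesis
        using span_opposite_crosses[OF assms opposite] by simp
    qed
  qed
qed

lemma span_cross_cross:
  assumes "i < l" "l+1 < k" "a < 2" "b < 2" "a' < 2" "b' < 2"
  shows "C (cross l a' b') \<le> C (cross i a b) + span"
proof (cases "l = i+1")
  case True
  have "C (cross (i+1) a' b') \<le> C (cross i a b) + ladder_degree k r i a - 1 + 4"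
    by (rule cross_le_of_low_cross_to_each[OF low_cross_from_edge(2)])
      (use assms True in \<open>simp_all add: cross_in_ladder mem_cross\<close>)
  moreover have "ladder_degree k r i a + 3 \<le> span"
    using True assms two_le_k r_le_1 by (auto simp: ladder_degree_def)
  ultimately show ?thesis
    using True by simp
next
  case False
  have "C (cross l a' b') \<le> C (cross i a b) + 3 * int (l-2-i) + 8"
    by (rule cross_le_far[OF low_cross_cross]) (use assms False in auto)
  then show ?thesis
    using False assms by (simp add: of_nat_diff)
qed

lemma gap_at_zero:
  assumes "r = 1" "e \<in> ladder k r" "0 \<in> e"
  shows "C e \<le> C (pendant k) + 3"
proof -
  have "ladder_degree k r 0 0 = 4"
    using assms(1) two_le_k by (simp add: ladder_degree_def)
  then show ?thesis
    using gap[of 0 0 e "pendant k"] assms two_le_k by (simp add: pendant_in_ladder mem_pendant)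
qed

lemma span_pendant_cross_odd:
  assumes "r = 1" "b < 2"
  shows "C (cross 0 1 b) \<le> C (pendant k) + span"
proof -
  have "C (cross 0 1 b) \<le> C (rung 0) + ladder_degree k r 0 1 - 1"
    using assms two_le_k by (intro gap) (simp_all add: rung_in_ladder cross_in_ladder mem_rung mem_cross)
  moreover have "C (rung 0) \<le> C (pendant k) + 3"
    using assms two_le_k by (intro gap_at_zero) (simp_all add: rung_in_ladder mem_rung)
  moreover have "ladder_degree k r 0 1 = 3"
    using two_le_k by (simp add: ladder_degree_def)
  moreover have "C (cross 0 1 b) \<le> C (pendant k) + 4" if "k = 2"
  proof -
    text \<open>Here \<open>span = 4\<close>; the route through \<open>cross 0 0 b\<close> has the same length as the
      one through \<open>rung 0\<close>, and both edges share the vertex \<open>0\<close>.\<close>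
    have "C (cross 0 0 b) \<le> C (pendant k) + 3"
      using assms two_le_k by (intro gap_at_zero) (simp_all add: cross_in_ladder mem_cross)
    moreover have "C (cross 0 1 b) \<le> C (cross 0 0 b) + ladder_degree k r 1 b - 1"
      using assms that by (intro gap) (simp_all add: cross_in_ladder mem_cross)
    moreover have "ladder_degree k r 1 b = 3"
      using that by (simp add: ladder_degree_def)
    moreover have "C (cross 0 0 b) \<noteq> C (rung 0)"
      using assms two_le_k by (intro proper[where v = 0])
        (simp_all add: rung_in_ladder cross_in_ladder cross_neq_rung mem_rung mem_cross)
    ultimately show ?thesis
      using \<open>C (cross 0 1 b) \<le> C (rung 0) + ladder_degree k r 0 1 - 1\<close>
        \<open>C (rung 0) \<le> C (pendant k) + 3\<close> \<open>ladder_degree k r 0 1 = 3\<close> by simp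
  qed
  ultimately show ?thesis
    using assms(1) two_le_k by (cases "k = 2") simp_all
qed

lemma span_pendant:
  assumes r: "r = 1" and f: "f \<in> ladder k r"
  shows "C f \<le> C (pendant k) + span"
  using f
proof (cases rule: ladder_edgeE)
  case (rung l)
  show ?thesis
  proof (cases "l = 0")
    case True
    then show ?thesis
      using rung gap_at_zero[OF r f] r two_le_k by (simp add: mem_rung)
  next
    case False
    have "C (rung l) \<le> C (pendant k) + 2 + 3 * int (l-1-0) + (if l+1 < k then 4 else 2)"
      by (rule rung_le_far[OF low_cross_from_pendant(1)[OF r]]) (use rung False in auto)
    then show ?thesis
      using rung False r by (auto simp: of_nat_diff split: if_splits)
  qed
next
  case (cross l a b)
  consider "l = 0" "a = 0" | "l = 0" "a = 1" | "l = 1" | "2 \<le> l"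
    using cross by linarith
  then show ?thesis
  proof cases
    case 1
    then show ?thesis
      using cross gap_at_zero[OF r f] r two_le_k by (simp add: mem_cross)
  next
    case 2
    then show ?thesis
      using cross span_pendant_cross_odd[OF r] by simp
  next
    case 3
    have "C (cross (0+1) a b) \<le> C (pendant k) + 3 + 4"
      by (rule cross_le_of_low_cross_to_each[OF low_cross_from_pendant(2)[OF r]]) (use cross 3 in auto)
    then show ?thesis
      using cross 3 r by simp
  next
    case 4
    have "C (cross l a b) \<le> C (pendant k) + 2 + 3 * int (l-2-0) + 8"
      by (rule cross_le_far[OF low_cross_from_pendant(1)[OF r]]) (use cross 4 in auto)
    then show ?thesis
      using cross 4 r by (simp add: of_nat_diff)
  qed
next
  case pendant
  then show ?thesis using two_le_k by simp
qed

lemma colour_span: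
  assumes e: "e \<in> ladder k r" and f: "f \<in> ladder k r"
  shows "C f \<le> C e + span"
proof -
  interpret neg: ladder_colour_gaps k r "\<lambda>e. - C e"
    by (rule uminus)
  from e show ?thesis
  proof (cases rule: ladder_edgeE)
    case pendant
    then show ?thesis using span_pendant f by simp
  next
    case e_rung: (rung i)
    from f show ?thesis
    proof (cases rule: ladder_edgeE)
      case (rung l)
      then show ?thesis
        using e_rung span_rung_rung neg.span_rung_rung[of l i] by (cases "i \<le> l") auto
    next
      case (cross l a b)
      then show ?thesis
        using e_rung span_rung_cross[of i l a b] neg.span_cross_rung[of l i a b] by (cases "i \<le> l") auto
    next
      case pendant
      then show ?thesis using neg.span_pendant[OF pendant(1) e] by simp
    qed
  next
    case e_cross: (cross i a b)
    from f show ?thesis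
    proof (cases rule: ladder_edgeE)
      case (rung l)
      then show ?thesis
        using e_cross span_cross_rung[of i l a b] neg.span_rung_cross[of l i a b] by (cases "i < l") auto
    next
      case (cross l a' b')
      consider "i < l" | "l < i" | "l = i" by linarith
      then show ?thesis
        using e_cross cross span_cross_cross[of i l a b a' b'] neg.span_cross_cross[of l i a' b' a b]
          span_cross_cross_same_level[of i a b a' b']
        by cases auto
    next
      case pendant
      then show ?thesis using neg.span_pendant[OF pendant(1) e] by simp
    qed
  qed
qed

end

lemma ladder_colour_gaps_of_interval_colouring:
  assumes c: "interval_colouring {0..<2*k+r} (ladder k r) c" and "2 \<le> k" "r \<le> 1"
  shows "ladder_colour_gaps k r (\<lambda>e. int (c e))"
proof
  show "int (c e) \<le> int (c e') + ladder_degree k r j a - 1"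
    if "j < k" "a < 2" "e \<in> ladder k r" "e' \<in> ladder k r" "2*j+a \<in> e" "2*j+a \<in> e'" for j a e e'
  proof -
    have "c e < c e' + card {e \<in> ladder k r. 2*j+a \<in> e}"
      using that by (intro interval_colouring_gap[OF c]) simp_all
    then have "int (c e) < int (c e') + int (card (ladder_star k r j a))"
      using ladder_edges_at[OF that(1,2)] by simp
    then show ?thesis
      using card_ladder_star[of k r j a] by linarith
  qed
  show "int (c e) \<noteq> int (c e')"
    if "e \<in> ladder k r" "e' \<in> ladder k r" "e \<noteq> e'" "v \<in> e" "v \<in> e'" for v e e'
    using interval_colouring_proper[OF c that] by simp
qed (use assms in simp_all)

lemma card_colours_ladder_le:
  assumes c: "interval_colouring {0..<2*k+r} (ladder k r) c" and k: "0 < k" and r: "r \<le> 1"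
  shows "card (c ` ladder k r) \<le> 3*k - 2 + r"
proof (cases "k = 1")
  case True
  have "ladder k r \<subseteq> insert (rung 0) (if r = 1 then {pendant 1} else {})"
    using True unfolding ladder_def by auto
  then have "card (ladder k r) \<le> card (insert (rung 0) (if r = 1 then {pendant 1} else {}))"
    by (rule card_mono[rotated]) simp
  also have "\<dots> \<le> 1 + r"
    using r by (cases "r = 1") (simp_all add: card_insert_if)
  finally show ?thesis
    using True card_image_le[OF finite_ladder, of c k r] by simp
next
  case False
  then interpret ladder_colour_gaps k r "\<lambda>e. int (c e)"
    using ladder_colour_gaps_of_interval_colouring[OF c] k r by simp
  show ?thesis
  proof (rule card_le_if_gaps_less)
    fix x y assume "x \<in> c ` ladder k r" "y \<in> c ` ladder k r"
    then obtain f e where "f \<in> ladder k r" "e \<in> ladder k r" "x = c f" "y = c e"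
      by blast
    then show "x < y + (3*k - 2 + r)"
      using colour_span[of e f] two_le_k by simp
  qed
qed

section \<open>An interval colouring with \<open>3k - 2 + r\<close> colours\<close>

definition ladder_colouring :: "nat \<Rightarrow> nat set \<Rightarrow> nat" where
  "ladder_colouring k e =
    (let j = Min e div 2; a = Min e mod 2 in
     if e = pendant k then 0
     else if e = rung j then 3*j+1
     else if e = cross j a a then 3*j+2
     else 3*j+3)"

lemma ladder_colouring_pendant: "ladder_colouring k (pendant k) = 0"
  by (simp add: ladder_colouring_def)

lemma ladder_colouring_rung: "0 < k \<Longrightarrow> ladder_colouring k (rung j) = 3*j+1"
  using pendant_neq_rung[of k j] by (simp add: ladder_colouring_def rung_def)

lemma ladder_colouring_cross:
  assumes "j+1 < k" "a < 2" "b < 2"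
  shows "ladder_colouring k (cross j a b) = 3*j + (if a = b then 2 else 3)"
proof -
  have "Min (cross j a b) = 2*j+a"
    using assms(2) by (simp add: cross_def min_def)
  then show ?thesis
    using assms pendant_neq_cross[OF assms] cross_neq_rung[of a j b j] cross_eq_iff[of a b a a j j]
    by (simp add: ladder_colouring_def Let_def)
qed

lemmas ladder_colouring_simps = ladder_colouring_pendant ladder_colouring_rung ladder_colouring_cross

lemma ladder_colouring_proper:
  assumes k: "0 < k" and e: "e \<in> ladder k r" and e': "e' \<in> ladder k r"
    and "e \<noteq> e'" and v: "v \<in> e" "v \<in> e'"
  shows "ladder_colouring k e \<noteq> ladder_colouring k e'"
proof
  assume eq: "ladder_colouring k e = ladder_colouring k e'"
  from e show False
  proof (cases rule: ladder_edgeE)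
    case e_rung: (rung i)
    from e' show False
    proof (cases rule: ladder_edgeE)
      case (rung l)
      then show False using e_rung eq \<open>e \<noteq> e'\<close> k by (simp add: ladder_colouring_rung)
    next
      case (cross l a b)
      then have "3*i+1 = 3*l + (if a = b then 2 else 3)"
        using e_rung eq k by (simp add: ladder_colouring_simps)
      then show False by (cases "a = b"; presburger)
    next
      case pendant
      then show False using e_rung eq k by (simp add: ladder_colouring_simps)
    qed
  next
    case e_cross: (cross i a b)
    from e' show False
    proof (cases rule: ladder_edgeE)
      case (rung l)
      then have "3*l+1 = 3*i + (if a = b then 2 else 3)"
        using e_cross eq k by (simp add: ladder_colouring_simps)
      then show False by (cases "a = b"; presburger)
    next
      case (cross l a' b')
      then have "3*i + (if a = b then 2 else 3) = 3*l + (if a' = b' then 2 else 3)"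
        using e_cross eq by (simp add: ladder_colouring_cross)
      then have l: "l = i" "a = b \<longleftrightarrow> a' = b'"
        by (auto split: if_splits; presburger)+
      have "a = a' \<or> b = b'"
        using v e_cross cross l(1) by (auto simp: mem_cross)
      then have "a = a' \<and> b = b'"
        using l(2) e_cross(2,3) cross(2,3) by auto
      then show False using e_cross cross l(1) \<open>e \<noteq> e'\<close> by simp
    next
      case pendant
      then show False using e_cross eq by (simp add: ladder_colouring_simps split: if_splits)
    qed
  next
    case e_pendant: pendant
    from e' show False
    proof (cases rule: ladder_edgeE)
      case (rung l)
      then show False using e_pendant eq k by (simp add: ladder_colouring_simps)
    next
      case (cross l a b)
      then show False using e_pendant eq by (simp add: ladder_colouring_simps split: if_splits)
    next
      case pendant
      then show False using e_pendant \<open>e \<noteq> e'\<close> by simp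
    qed
  qed
qed

lemma ladder_colouring_star:
  assumes "j < k" "a < 2"
  shows "ladder_colouring k ` ladder_star k r j a = {3*j+1}
     \<union> (if 0 < j then {3*(j-1)+2, 3*(j-1)+3} else {})
     \<union> (if j+1 < k then {3*j+2, 3*j+3} else {})
     \<union> (if j = 0 \<and> a = 0 \<and> r = 1 then {0} else {})"
proof -
  have a: "a = 0 \<or> a = 1"
    using assms(2) by linarith
  have "ladder_colouring k ` (if 0 < j then {cross (j-1) 0 a, cross (j-1) 1 a} else {})
      = (if 0 < j then {3*(j-1)+2, 3*(j-1)+3} else {})"
    using a assms by (cases "0 < j"; elim disjE) (auto simp: ladder_colouring_cross)
  moreover have "ladder_colouring k ` (if j+1 < k then {cross j a 0, cross j a 1} else {})
      = (if j+1 < k then {3*j+2, 3*j+3} else {})"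
    using a assms by (cases "j+1 < k"; elim disjE) (auto simp: ladder_colouring_cross)
  moreover have "ladder_colouring k ` (if j = 0 \<and> a = 0 \<and> r = 1 then {pendant k} else {})
      = (if j = 0 \<and> a = 0 \<and> r = 1 then {0} else {})"
    by (simp add: ladder_colouring_pendant)
  ultimately show ?thesis
    using assms unfolding ladder_star_def image_Un by (simp add: ladder_colouring_rung)
qed

lemma ladder_edges_at_apex:
  assumes "r = 1"
  shows "{e \<in> ladder k r. 2*k \<in> e} = {pendant k}"
proof (intro equalityI subsetI)
  fix e assume "e \<in> {e \<in> ladder k r. 2*k \<in> e}"
  then have e: "e \<in> ladder k r" "2*k \<in> e" by simp_all
  from e(1) show "e \<in> {pendant k}"
    by (cases rule: ladder_edgeE) (use e(2) in \<open>auto simp: mem_rung mem_cross\<close>)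
qed (use assms in \<open>simp add: pendant_in_ladder mem_pendant\<close>)

lemma ladder_colouring_interval:
  assumes k: "0 < k" and r: "r \<le> 1" and v: "v < 2*k+r"
  shows "\<exists>x y. ladder_colouring k ` {e \<in> ladder k r. v \<in> e} = {x..y}"
proof (cases "v < 2*k")
  case False
  then have "r = 1" "v = 2*k"
    using v r by simp_all
  then have "ladder_colouring k ` {e \<in> ladder k r. v \<in> e} = {0..0}"
    using ladder_edges_at_apex[of r k] by (simp add: ladder_colouring_pendant)
  then show ?thesis by blast
next
  case True
  define j a where "j = v div 2" and "a = v mod 2"
  have va: "v = 2*j+a" "a < 2" "j < k"
    using True unfolding j_def a_def by simp_all
  have colours: "ladder_colouring k ` {e \<in> ladder k r. v \<in> e} = {3*j+1}
     \<union> (if 0 < j then {3*(j-1)+2, 3*(j-1)+3} else {})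
     \<union> (if j+1 < k then {3*j+2, 3*j+3} else {})
     \<union> (if j = 0 \<and> a = 0 \<and> r = 1 then {0} else {})"
    unfolding va(1) ladder_edges_at[OF va(3,2)] by (rule ladder_colouring_star[OF va(3,2)])
  consider "j = 0" "k = 1" | "j = 0" "1 < k" | m where "j = m+1" "j+1 < k" | m where "j = m+1" "j+1 = k"
    using va k by (metis One_nat_def Suc_eq_plus1 Suc_lessI gr0_conv_Suc less_one not_gr0)
  then show ?thesis
  proof cases
    case 1
    then have "ladder_colouring k ` {e \<in> ladder k r. v \<in> e} = {(if a = 0 \<and> r = 1 then 0 else 1)..1}"
      unfolding colours by auto
    then show ?thesis by blast
  next
    case 2
    then have "ladder_colouring k ` {e \<in> ladder k r. v \<in> e} = {(if a = 0 \<and> r = 1 then 0 else 1)..3}"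
      unfolding colours by auto
    then show ?thesis by blast
  next
    case (3 m)
    then have "ladder_colouring k ` {e \<in> ladder k r. v \<in> e} = {3*m+2..3*m+6}"
      unfolding colours by auto
    then show ?thesis by blast
  next
    case (4 m)
    then have "ladder_colouring k ` {e \<in> ladder k r. v \<in> e} = {3*m+2..3*m+4}"
      unfolding colours by auto
    then show ?thesis by blast
  qed
qed

lemma interval_colouring_ladder:
  assumes "0 < k" "r \<le> 1"
  shows "interval_colouring {0..<2*k+r} (ladder k r) (ladder_colouring k)"
  unfolding interval_colouring_def
  using ladder_colouring_proper[OF assms(1)] ladder_colouring_interval[OF assms] by auto

lemma card_colours_ladder_ge:
  assumes k: "0 < k" and r: "r \<le> 1"
  shows "3*k - 2 + r \<le> card (ladder_colouring k ` ladder k r)"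
proof -
  have "{1-r..3*k-2} \<subseteq> ladder_colouring k ` ladder k r"
  proof
    fix x assume x: "x \<in> {1-r..3*k-2}"
    show "x \<in> ladder_colouring k ` ladder k r"
    proof (cases "x = 0")
      case True
      then have "r = 1" using x r by auto
      then show ?thesis
        using True ladder_colouring_pendant pendant_in_ladder by (metis image_eqI)
    next
      case False
      define j where "j = (x-1) div 3"
      have x3: "x = 3*j + (x-1) mod 3 + 1" "x \<le> 3*k-2"
        using False x div_mult_mod_eq[of "x-1" 3] unfolding j_def by auto
      consider "(x-1) mod 3 = 0" | "(x-1) mod 3 = 1" | "(x-1) mod 3 = 2"
        by linarith
      then show ?thesis
      proof cases
        case 1
        then have "x = ladder_colouring k (rung j)" "rung j \<in> ladder k r"
          using x3 k by (simp_all add: ladder_colouring_rung rung_in_ladder)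
        then show ?thesis by blast
      next
        case 2
        then have "x = ladder_colouring k (cross j 0 0)" "cross j 0 0 \<in> ladder k r"
          using x3 by (simp_all add: ladder_colouring_cross cross_in_ladder)
        then show ?thesis by blast
      next
        case 3
        then have "x = ladder_colouring k (cross j 0 1)" "cross j 0 1 \<in> ladder k r"
          using x3 by (simp_all add: ladder_colouring_cross cross_in_ladder)
        then show ?thesis by blast
      qed
    qed
  qed
  then have "card {1-r..3*k-2} \<le> card (ladder_colouring k ` ladder k r)"
    by (rule card_mono[rotated]) (simp add: finite_ladder)
  then show ?thesis
    using k r by auto
qed

lemma t_max_ladder:
  assumes "0 < k" "r \<le> 1"
  shows "t_max {0..<2*k+r} (ladder k r) = 3*k - 2 + r"
proof (rule t_max_eqI)
  show "interval_colouring {0..<2*k+r} (ladder k r) (ladder_colouring k)"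
    using assms by (rule interval_colouring_ladder)
  then show "card (ladder_colouring k ` ladder k r) = 3*k - 2 + r"
    using card_colours_ladder_le card_colours_ladder_ge assms by (simp add: le_antisym)
qed (use card_colours_ladder_le assms in blast)

section \<open>A planar drawing\<close>

definition ladder_point :: "nat \<Rightarrow> nat \<Rightarrow> complex" where
  "ladder_point k v = (if v < 2*k then Complex (real (v div 2)) (if even v then 1 else -1) else Complex 0 (3/2))"

lemma ladder_point_top: "j < k \<Longrightarrow> ladder_point k (2*j) = Complex (real j) 1"
  by (simp add: ladder_point_def)

lemma ladder_point_bottom: "j < k \<Longrightarrow> ladder_point k (2*j+1) = Complex (real j) (-1)"
  by (simp add: ladder_point_def)

lemma ladder_point_apex: "ladder_point k (2*k) = Complex 0 (3/2)"
  by (simp add: ladder_point_def)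

lemma inj_on_ladder_point:
  assumes "r \<le> 1"
  shows "inj_on (ladder_point k) {0..<2*k+r}"
proof (rule inj_onI)
  fix u v assume u: "u \<in> {0..<2*k+r}" and v: "v \<in> {0..<2*k+r}"
    and eq: "ladder_point k u = ladder_point k v"
  show "u = v"
  proof (cases "u < 2*k \<and> v < 2*k")
    case True
    then have "u div 2 = v div 2" "even u \<longleftrightarrow> even v"
      using eq by (auto simp: ladder_point_def complex_eq_iff split: if_splits)
    then show "u = v"
      by (metis div_mult_mod_eq odd_iff_mod_2_eq_one even_iff_mod_2_eq_zero)
  next
    case False
    then show "u = v"
      using eq u v assms by (auto simp: ladder_point_def complex_eq_iff split: if_splits)
  qed
qed

text \<open>Every edge is a straight segment, except the cross edge \<open>{2*j+1, 2*j+2}\<close>, which would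
  cross the diagonal \<open>{2*j, 2*j+3}\<close>; it is routed around a rectangle that encloses everything
  drawn at lower levels.\<close>

definition detour :: "nat \<Rightarrow> real \<Rightarrow> complex" where
  "detour j = linepath (Complex (real j) (-1)) (Complex (real j) (-2 - real j)) +++
     (linepath (Complex (real j) (-2 - real j)) (Complex (-1 - real j) (-2 - real j)) +++
     (linepath (Complex (-1 - real j) (-2 - real j)) (Complex (-1 - real j) (2 + real j)) +++
     (linepath (Complex (-1 - real j) (2 + real j)) (Complex (real j + 1) (2 + real j)) +++
      linepath (Complex (real j + 1) (2 + real j)) (Complex (real j + 1) 1))))"

definition ladder_arc :: "nat \<Rightarrow> nat set \<Rightarrow> real \<Rightarrow> complex" where
  "ladder_arc k e = (if e = cross (Min e div 2) 1 0 then detour (Min e div 2)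
     else linepath (ladder_point k (Min e)) (ladder_point k (Max e)))"

definition vseg :: "real \<Rightarrow> real \<Rightarrow> real \<Rightarrow> complex set" where
  "vseg x y1 y2 = {z. Re z = x \<and> y1 \<le> Im z \<and> Im z \<le> y2}"

definition hseg :: "real \<Rightarrow> real \<Rightarrow> real \<Rightarrow> complex set" where
  "hseg y x1 x2 = {z. Im z = y \<and> x1 \<le> Re z \<and> Re z \<le> x2}"

lemma closed_segment_vertical:
  "y1 \<le> y2 \<Longrightarrow> closed_segment (Complex x y1) (Complex x y2) = vseg x y1 y2"
  "y1 \<le> y2 \<Longrightarrow> closed_segment (Complex x y2) (Complex x y1) = vseg x y1 y2"
  by (auto simp: closed_segment_same_Re closed_segment_eq_real_ivl vseg_def)

lemma closed_segment_horizontal: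
  "x1 \<le> x2 \<Longrightarrow> closed_segment (Complex x1 y) (Complex x2 y) = hseg y x1 x2"
  "x1 \<le> x2 \<Longrightarrow> closed_segment (Complex x2 y) (Complex x1 y) = hseg y x1 x2"
  by (auto simp: closed_segment_same_Im closed_segment_eq_real_ivl hseg_def)

lemma closed_segment_diagonal:
  "closed_segment (Complex x 1) (Complex (x+1) (-1)) \<subseteq> {z. x \<le> Re z \<and> Re z \<le> x+1 \<and> Im z = 1 - 2 * (Re z - x)}"
proof
  fix z assume "z \<in> closed_segment (Complex x 1) (Complex (x+1) (-1))"
  then obtain u where u: "0 \<le> u" "u \<le> 1" "z = (1-u) *\<^sub>R Complex x 1 + u *\<^sub>R Complex (x+1) (-1)"
    unfolding closed_segment_def by blast
  have "Re z = x + u" "Im z = 1 - 2*u"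
    unfolding u(3) by (simp_all add: algebra_simps)
  then show "z \<in> {z. x \<le> Re z \<and> Re z \<le> x+1 \<and> Im z = 1 - 2 * (Re z - x)}"
    using u by auto
qed

datatype edge_kind = Rung | Top | Bottom | Diagonal | Detour | Apex

fun kind_edge :: "nat \<Rightarrow> edge_kind \<Rightarrow> nat \<Rightarrow> nat set" where
  "kind_edge k Rung j = rung j"
| "kind_edge k Top j = cross j 0 0"
| "kind_edge k Bottom j = cross j 1 1"
| "kind_edge k Diagonal j = cross j 0 1"
| "kind_edge k Detour j = cross j 1 0"
| "kind_edge k Apex j = pendant k"

fun kind_valid :: "nat \<Rightarrow> nat \<Rightarrow> edge_kind \<Rightarrow> nat \<Rightarrow> bool" where
  "kind_valid k r Rung j \<longleftrightarrow> j < k"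
| "kind_valid k r Apex j \<longleftrightarrow> j = 0 \<and> r = 1"
| "kind_valid k r t j \<longleftrightarrow> j+1 < k"

text \<open>The arc of an edge minus its endpoints lies in the region \<open>kind_interior t j\<close>.\<close>

fun kind_interior :: "edge_kind \<Rightarrow> nat \<Rightarrow> complex set" where
  "kind_interior Rung j = {z. Re z = real j \<and> -1 < Im z \<and> Im z < 1}"
| "kind_interior Top j = {z. Im z = 1 \<and> real j < Re z \<and> Re z < real j + 1}"
| "kind_interior Bottom j = {z. Im z = -1 \<and> real j < Re z \<and> Re z < real j + 1}"
| "kind_interior Diagonal j = {z. real j < Re z \<and> Re z < real j + 1 \<and> Im z = 1 - 2 * (Re z - real j)}"
| "kind_interior Detour j = {z. Re z = real j \<and> -2 - real j \<le> Im z \<and> Im z < -1}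
     \<union> hseg (-2 - real j) (-1 - real j) (real j) \<union> vseg (-1 - real j) (-2 - real j) (2 + real j)
     \<union> hseg (2 + real j) (-1 - real j) (real j + 1) \<union> {z. Re z = real j + 1 \<and> 1 < Im z \<and> Im z \<le> 2 + real j}"
| "kind_interior Apex j = {z. Re z = 0 \<and> 1 < Im z \<and> Im z < 3/2}"

lemma real_nat_trichotomy: "j = l \<or> real j + 1 \<le> real l \<or> real l + 1 \<le> real j"
  by linarith

lemma kind_interior_disjoint:
  assumes "(t, j) \<noteq> (t', l)" "t = Apex \<Longrightarrow> j = 0" "t' = Apex \<Longrightarrow> l = 0"
  shows "kind_interior t j \<inter> kind_interior t' l = {}"
  using assms real_nat_trichotomy[of j l]
  by (cases t; cases t') (auto simp: vseg_def hseg_def)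

lemma ladder_point_not_in_kind_interior: "ladder_point k v \<notin> kind_interior t j"
  using real_nat_trichotomy[of j "v div 2"]
  by (cases t) (auto simp: ladder_point_def vseg_def hseg_def)

lemma detour_props:
  shows "arc (detour j)" "pathstart (detour j) = Complex (real j) (-1)"
    "pathfinish (detour j) = Complex (real j + 1) 1"
    "path_image (detour j) \<subseteq> {Complex (real j) (-1), Complex (real j + 1) 1} \<union> kind_interior Detour j"
proof -
  let ?J = "real j"
  define L1 where "L1 = linepath (Complex ?J (-1)) (Complex ?J (-2 - ?J))"
  define L2 where "L2 = linepath (Complex ?J (-2 - ?J)) (Complex (-1 - ?J) (-2 - ?J))"
  define L3 where "L3 = linepath (Complex (-1 - ?J) (-2 - ?J)) (Complex (-1 - ?J) (2 + ?J))"
  define L4 where "L4 = linepath (Complex (-1 - ?J) (2 + ?J)) (Complex (?J + 1) (2 + ?J))"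
  define L5 where "L5 = linepath (Complex (?J + 1) (2 + ?J)) (Complex (?J + 1) 1)"
  have d: "detour j = L1 +++ (L2 +++ (L3 +++ (L4 +++ L5)))"
    unfolding detour_def L1_def L2_def L3_def L4_def L5_def ..
  have J: "0 \<le> ?J" by simp
  have i: "path_image L1 = vseg ?J (-2 - ?J) (-1)" "path_image L2 = hseg (-2 - ?J) (-1 - ?J) ?J"
    "path_image L3 = vseg (-1 - ?J) (-2 - ?J) (2 + ?J)" "path_image L4 = hseg (2 + ?J) (-1 - ?J) (?J + 1)"
    "path_image L5 = vseg (?J + 1) 1 (2 + ?J)"
    unfolding L1_def L2_def L3_def L4_def L5_def using J
    by (simp_all add: closed_segment_vertical closed_segment_horizontal)
  have a: "arc L1" "arc L2" "arc L3" "arc L4" "arc L5"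
    unfolding L1_def L2_def L3_def L4_def L5_def using J by (auto simp: complex_eq_iff)
  have s: "pathstart L1 = Complex ?J (-1)" "pathstart L2 = Complex ?J (-2 - ?J)"
    "pathstart L3 = Complex (-1 - ?J) (-2 - ?J)" "pathstart L4 = Complex (-1 - ?J) (2 + ?J)"
    "pathstart L5 = Complex (?J + 1) (2 + ?J)"
    unfolding L1_def L2_def L3_def L4_def L5_def by simp_all
  have f: "pathfinish L1 = Complex ?J (-2 - ?J)" "pathfinish L2 = Complex (-1 - ?J) (-2 - ?J)"
    "pathfinish L3 = Complex (-1 - ?J) (2 + ?J)" "pathfinish L4 = Complex (?J + 1) (2 + ?J)"
    "pathfinish L5 = Complex (?J + 1) 1"
    unfolding L1_def L2_def L3_def L4_def L5_def by simp_all
  have p45: "path_image (L4 +++ L5) = path_image L4 \<union> path_image L5"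
    using path_image_join[of L4 L5] s f by simp
  have p35: "path_image (L3 +++ (L4 +++ L5)) = path_image L3 \<union> path_image (L4 +++ L5)"
    using path_image_join[of L3 "L4 +++ L5"] s f by simp
  have p25: "path_image (L2 +++ (L3 +++ (L4 +++ L5))) = path_image L2 \<union> path_image (L3 +++ (L4 +++ L5))"
    using path_image_join[of L2 "L3 +++ (L4 +++ L5)"] s f by simp
  have p15: "path_image (detour j) = path_image L1 \<union> path_image (L2 +++ (L3 +++ (L4 +++ L5)))"
    unfolding d using path_image_join[of L1 "L2 +++ (L3 +++ (L4 +++ L5))"] s f by simp
  have b45: "arc (L4 +++ L5)"
    by (rule arc_join[OF a(4,5)]) (use s f i in \<open>auto simp: vseg_def hseg_def complex_eq_iff\<close>)
  have b35: "arc (L3 +++ (L4 +++ L5))"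
    by (rule arc_join[OF a(3) b45]) (use s f i p45 J in \<open>auto simp: vseg_def hseg_def complex_eq_iff\<close>)
  have b25: "arc (L2 +++ (L3 +++ (L4 +++ L5)))"
    by (rule arc_join[OF a(2) b35]) (use s f i p35 p45 J in \<open>auto simp: vseg_def hseg_def complex_eq_iff\<close>)
  show "arc (detour j)"
    unfolding d by (rule arc_join[OF a(1) b25]) (use s f i p25 p35 p45 J in \<open>auto simp: vseg_def hseg_def complex_eq_iff\<close>)
  show "pathstart (detour j) = Complex (real j) (-1)" "pathfinish (detour j) = Complex (real j + 1) 1"
    unfolding d using s f by simp_all
  show "path_image (detour j) \<subseteq> {Complex (real j) (-1), Complex (real j + 1) 1} \<union> kind_interior Detour j"
    unfolding p15 p25 p35 p45 i using J by (auto simp: vseg_def hseg_def complex_eq_iff)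
qed

lemma ladder_edge_kind:
  assumes "e \<in> ladder k r"
  shows "\<exists>t j. kind_valid k r t j \<and> e = kind_edge k t j"
  using assms
proof (cases rule: ladder_edgeE)
  case (rung j)
  then show ?thesis by (intro exI[of _ Rung] exI[of _ j]) simp
next
  case (cross j a b)
  then consider "a = 0" "b = 0" | "a = 1" "b = 1" | "a = 0" "b = 1" | "a = 1" "b = 0"
    by linarith
  then show ?thesis
  proof cases
    case 1 then show ?thesis using cross by (intro exI[of _ Top] exI[of _ j]) simp
  next
    case 2 then show ?thesis using cross by (intro exI[of _ Bottom] exI[of _ j]) simp
  next
    case 3 then show ?thesis using cross by (intro exI[of _ Diagonal] exI[of _ j]) simp
  next
    case 4 then show ?thesis using cross by (intro exI[of _ Detour] exI[of _ j]) simp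
  qed
next
  case pendant
  then show ?thesis by (intro exI[of _ Apex] exI[of _ 0]) simp
qed

fun kind_arc :: "edge_kind \<Rightarrow> nat \<Rightarrow> real \<Rightarrow> complex" where
  "kind_arc Rung j = linepath (Complex (real j) 1) (Complex (real j) (-1))"
| "kind_arc Top j = linepath (Complex (real j) 1) (Complex (real j + 1) 1)"
| "kind_arc Bottom j = linepath (Complex (real j) (-1)) (Complex (real j + 1) (-1))"
| "kind_arc Diagonal j = linepath (Complex (real j) 1) (Complex (real j + 1) (-1))"
| "kind_arc Detour j = detour j"
| "kind_arc Apex j = linepath (Complex 0 1) (Complex 0 (3/2))"

lemma ladder_arc_kind_edge:
  assumes "kind_valid k r t j" "0 < k"
  shows "ladder_arc k (kind_edge k t j) = kind_arc t j"
  using assms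
  by (cases t) (simp_all add: ladder_arc_def rung_def cross_def pendant_def ladder_point_def
      doubleton_eq_iff add.commute)

lemma ladder_point_kind_edge:
  assumes "kind_valid k r t j" "0 < k"
  shows "ladder_point k ` kind_edge k t j = {pathstart (kind_arc t j), pathfinish (kind_arc t j)}"
  using assms ladder_point_top[of j k] ladder_point_bottom[of j k] ladder_point_top[of "j+1" k]
    ladder_point_bottom[of "j+1" k] ladder_point_top[of 0 k] ladder_point_apex[of k] detour_props(2,3)[of j]
  by (cases t) (simp_all add: rung_def cross_def pendant_def add.commute)

lemma arc_kind_arc:
  "arc (kind_arc t j) \<and>
    path_image (kind_arc t j) \<subseteq> {pathstart (kind_arc t j), pathfinish (kind_arc t j)} \<union> kind_interior t j"
proof (cases t)
  case Diagonal
  then show ?thesis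
    using closed_segment_diagonal[of "real j"] by (auto simp: complex_eq_iff)
next
  case Detour
  then show ?thesis
    using detour_props[of j] by simp
qed (auto simp: complex_eq_iff closed_segment_vertical closed_segment_horizontal vseg_def hseg_def)

lemma planar_ladder:
  assumes k: "0 < k" and r: "r \<le> 1"
  shows "planar {0..<2*k+r} (ladder k r)"
  unfolding planar_def planar_embedding_def
proof (intro exI[of _ "ladder_point k"] exI[of _ "ladder_arc k"] conjI ballI impI)
  let ?V = "{0..<2*k+r}"
  have inj: "inj_on (ladder_point k) ?V"
    using r by (rule inj_on_ladder_point)
  then show "inj_on (ladder_point k) ?V" .
  have arc: "\<exists>t j. kind_valid k r t j \<and> e = kind_edge k t j \<and> arc (ladder_arc k e)
      \<and> {pathstart (ladder_arc k e), pathfinish (ladder_arc k e)} = ladder_point k ` e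
      \<and> path_image (ladder_arc k e) \<subseteq> ladder_point k ` e \<union> kind_interior t j"
    if e: "e \<in> ladder k r" for e
  proof -
    obtain t j where tj: "kind_valid k r t j" "e = kind_edge k t j"
      using ladder_edge_kind[OF e] by blast
    then show ?thesis
      using ladder_arc_kind_edge[OF tj(1) k] ladder_point_kind_edge[OF tj(1) k] arc_kind_arc[of t j]
      by auto
  qed
  have on_arc: "z \<in> ladder_point k ` e"
    if "e \<in> ladder k r" "z \<in> path_image (ladder_arc k e)" "z \<in> ladder_point k ` ?V" for e z
    using arc[OF that(1)] that(2,3) ladder_point_not_in_kind_interior by blast
  fix e assume e: "e \<in> ladder k r"
  show "arc (ladder_arc k e)"
    "{pathstart (ladder_arc k e), pathfinish (ladder_arc k e)} = ladder_point k ` e"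
    using arc[OF e] by blast+
  show "ladder_point k v \<notin> path_image (ladder_arc k e)" if "v \<in> ?V" "v \<notin> e" for v
  proof
    assume "ladder_point k v \<in> path_image (ladder_arc k e)"
    then have "ladder_point k v \<in> ladder_point k ` e"
      using on_arc[OF e] that(1) by simp
    then obtain w where "w \<in> e" "ladder_point k v = ladder_point k w"
      by blast
    moreover have "w \<in> ?V"
      using \<open>w \<in> e\<close> ladder_edge_subset[OF e] by blast
    ultimately show False
      using inj that unfolding inj_on_def by metis
  qed
  fix e' assume e': "e' \<in> ladder k r" "e \<noteq> e'"
  obtain t j where tj: "kind_valid k r t j" "e = kind_edge k t j"
    "path_image (ladder_arc k e) \<subseteq> ladder_point k ` e \<union> kind_interior t j"
    using arc[OF e] by blast
  obtain t' l where tl: "kind_valid k r t' l" "e' = kind_edge k t' l"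
    "path_image (ladder_arc k e') \<subseteq> ladder_point k ` e' \<union> kind_interior t' l"
    using arc[OF e'(1)] by blast
  have "kind_interior t j \<inter> kind_interior t' l = {}"
    using tj(1,2) tl(1,2) e'(2) by (intro kind_interior_disjoint) (auto elim: kind_valid.elims)
  then have "path_image (ladder_arc k e) \<inter> path_image (ladder_arc k e') \<subseteq> ladder_point k ` e \<inter> ladder_point k ` e'"
    using tj(3) tl(3) ladder_point_not_in_kind_interior by blast
  also have "\<dots> = ladder_point k ` (e \<inter> e')"
    using inj ladder_edge_subset[OF e] ladder_edge_subset[OF e'(1)]
    by (intro inj_on_image_Int[symmetric]) auto
  finally show "path_image (ladder_arc k e) \<inter> path_image (ladder_arc k e') \<subseteq> ladder_point k ` (e \<inter> e')" .
qed

theorem mainTheorem7: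
  fixes n :: nat
  assumes "n \<ge> 2"
  shows "\<exists>(V :: nat set) (E :: nat set set).
           simple_graph V E \<and> card V = n \<and> planar V E \<and>
           interval_colourable V E \<and> t_max V E = (3 * n) div 2 - 2"
proof -
  define k r where "k = n div 2" and "r = n mod 2"
  have n: "n = 2*k + r" and k: "0 < k" and r: "r \<le> 1"
    using assms unfolding k_def r_def by auto
  have "(3 * n) div 2 - 2 = 3*k - 2 + r"
    using n k r by (cases "r = 0") auto
  moreover have "interval_colourable {0..<2*k+r} (ladder k r)"
    unfolding interval_colourable_def using interval_colouring_ladder[OF k r] by blast
  ultimately show ?thesis
    using simple_graph_ladder[OF k, of r] planar_ladder[OF k r] t_max_ladder[OF k r] n
    by (intro exI[of _ "{0..<n}"] exI[of _ "ladder k r"]) simp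
qed

end
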